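(* Let $K\subset\mathbb{R}^n$ be a convex body with $w(K)=r(K)+R(K)$, let $C_K$ be a Scott-completion of $K$, and for $\lambda\in[0,1]$ let $K_\lambda:=\lambda K+(1-\lambda)C_K$. Then for all $\lambda\in[0,1]$, \[ f(K_\lambda)=\lambda f(K)+(1-\lambda)f(C_K), \] and consequently $w(K_\lambda)=r(K_\lambda)+R(K_\lambda)$.
   Context: A convex body is a compact convex subset of $\mathbb{R}^n$ (here with $R(K)>0$ so the quotients are defined). $r$ = inradius (radius of a largest ball contained in the body), $w$ = width (smallest distance between two distinct parallel supporting hyperplanes), $D$ = diameter, $R$ = circumradius (radius of the smallest enclosing ball). Minkowski sum $A+B=\{a+b\}$, $\lambda A=\{\lambda a\}$. A Scott-completion of $K$ is a convex body $C_K\supseteq K$ with $D(K)=D(C_K)=w(C_K)$ and $R(C_K)=R(K)$. The map $f$ is $f(K)=\left(\frac{r(K)}{R(K)},\frac{w(K)}{2R(K)},\frac{D(K)}{2R(K)}\right)\in[0,1]^3$. *)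

theory Defs
  imports "HOL-Analysis.Analysis"
begin

definition convex_body :: "'a::euclidean_space set \<Rightarrow> bool" where
  "convex_body K \<longleftrightarrow> compact K \<and> convex K \<and> K \<noteq> {}"

definition inradius :: "'a::euclidean_space set \<Rightarrow> real" where
  "inradius K = Sup {\<rho>. \<rho> \<ge> 0 \<and> (\<exists>x. cball x \<rho> \<subseteq> K)}"

definition circumradius :: "'a::euclidean_space set \<Rightarrow> real" where
  "circumradius K = Inf {\<rho>. \<rho> \<ge> 0 \<and> (\<exists>x. K \<subseteq> cball x \<rho>)}"

definition width :: "'a::euclidean_space set \<Rightarrow> real" where
  "width K = Inf {(SUP x\<in>K. u \<bullet> x) - (INF x\<in>K. u \<bullet> x) | u. norm u = 1}"

definition mink_comb :: "real \<Rightarrow> 'a::euclidean_space set \<Rightarrow> 'a set \<Rightarrow> 'a set" where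
  "mink_comb t A B = {t *\<^sub>R a + (1 - t) *\<^sub>R b | a b. a \<in> A \<and> b \<in> B}"

definition scott_completion :: "'a::euclidean_space set \<Rightarrow> 'a set \<Rightarrow> bool" where
  "scott_completion K C \<longleftrightarrow> convex_body C \<and> K \<subseteq> C \<and>
     diameter K = diameter C \<and> diameter C = width C \<and> circumradius C = circumradius K"

definition fmap :: "'a::euclidean_space set \<Rightarrow> real \<times> real \<times> real" where
  "fmap K = (inradius K / circumradius K, width K / (2 * circumradius K),
             diameter K / (2 * circumradius K))"

end

theory Submission
  imports Defs
begin

text \<open>
  All four quantities are read off support functions. The support function of
  \<open>\<lambda>K + (1 - \<lambda>)C\<close> is the convex combination of those of \<open>K\<close> and \<open>C\<close>, and the Scott
  completion \<open>C\<close> has constant breadth \<open>D\<close>; hence the width of \<open>K\<^sub>\<lambda>\<close> is affine in \<open>\<lambda>\<close>, while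
  diameter and circumradius are constant because \<open>K \<subseteq> K\<^sub>\<lambda> \<subseteq> C\<close>. If \<open>c\<close> is the
  circumcentre of \<open>C\<close>, then \<open>w = r + R\<close> forces the ball of radius \<open>r(K)\<close> about \<open>c\<close> into \<open>K\<close>,
  and constant width forces the ball of radius \<open>D - R\<close> about \<open>c\<close> into \<open>C\<close>, which is therefore
  an inball of \<open>C\<close>. Every direction in which the inball of \<open>K\<close> touches \<open>K\<close> is one in which
  the concentric inball of \<open>C\<close> touches \<open>C\<close>. Given any ball in \<open>K\<^sub>\<lambda>\<close>, a maximality argument
  produces such a touching direction on whose side its centre lies, so the ball is no larger
  than the combination of the two concentric inballs: the inradius is affine as well.
\<close>

section \<open>Support functions\<close>

abbreviation support :: "'a::euclidean_space set \<Rightarrow> 'a \<Rightarrow> real" where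
  "support A u \<equiv> SUP x\<in>A. u \<bullet> x"

abbreviation lower_support :: "'a::euclidean_space set \<Rightarrow> 'a \<Rightarrow> real" where
  "lower_support A u \<equiv> INF x\<in>A. u \<bullet> x"

abbreviation breadth :: "'a::euclidean_space set \<Rightarrow> 'a \<Rightarrow> real" where
  "breadth A u \<equiv> support A u - lower_support A u"

lemma lower_support_eq_uminus_support:
  fixes A :: "'a::euclidean_space set"
  shows "lower_support A u = - support A (- u)"
  by (simp add: Inf_real_def image_image)

lemma support_upper:
  fixes A :: "'a::euclidean_space set"
  assumes "compact A" "y \<in> A"
  shows "u \<bullet> y \<le> support A u"
  using assms by (intro cSUP_upper bounded_imp_bdd_above compact_imp_bounded
      compact_continuous_image continuous_intros)

lemma lower_support_lower:
  fixes A :: "'a::euclidean_space set"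
  assumes "compact A" "y \<in> A"
  shows "lower_support A u \<le> u \<bullet> y"
  using support_upper[OF assms, of "- u"] by (simp add: lower_support_eq_uminus_support)

lemma support_attained:
  fixes A :: "'a::euclidean_space set"
  assumes "compact A" "A \<noteq> {}"
  obtains a where "a \<in> A" "support A u = u \<bullet> a"
proof -
  have "continuous_on A (\<lambda>x. u \<bullet> x)"
    by (intro continuous_intros)
  then obtain a where "a \<in> A" "\<forall>y\<in>A. u \<bullet> y \<le> u \<bullet> a"
    using continuous_attains_sup[OF assms] by blast
  then have "support A u = u \<bullet> a"
    by (intro cSup_eq_maximum) auto
  with \<open>a \<in> A\<close> show thesis ..
qed

lemma lower_support_attained:
  fixes A :: "'a::euclidean_space set"
  assumes "compact A" "A \<noteq> {}"
  obtains a where "a \<in> A" "lower_support A u = u \<bullet> a"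
  using support_attained[OF assms, of "- u"] by (metis inner_minus_left minus_minus
      lower_support_eq_uminus_support)

lemma breadth_le_diameter:
  fixes A :: "'a::euclidean_space set"
  assumes "compact A" "A \<noteq> {}" "norm u = 1"
  shows "breadth A u \<le> diameter A"
proof -
  obtain a b where "a \<in> A" "support A u = u \<bullet> a" "b \<in> A" "lower_support A u = u \<bullet> b"
    using support_attained lower_support_attained assms(1,2) by metis
  moreover have "u \<bullet> (a - b) \<le> norm (a - b)"
    using norm_cauchy_schwarz[of u "a - b"] assms(3) by simp
  moreover have "norm (a - b) \<le> diameter A"
    using diameter_bounded_bound[OF compact_imp_bounded[OF assms(1)], of a b] \<open>a \<in> A\<close> \<open>b \<in> A\<close>
    by (simp add: dist_norm)
  ultimately show ?thesis by (simp add: inner_diff_right)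
qed

lemma lower_support_ge_of_subset_cball:
  fixes A :: "'a::euclidean_space set"
  assumes "compact A" "A \<noteq> {}" "A \<subseteq> cball c R" "norm u = 1"
  shows "c \<bullet> u - lower_support A u \<le> R"
proof -
  obtain b where b: "b \<in> A" "lower_support A u = u \<bullet> b"
    using lower_support_attained assms(1,2) by metis
  have "u \<bullet> (c - b) \<le> norm (c - b)"
    using norm_cauchy_schwarz[of u "c - b"] assms(4) by simp
  also have "\<dots> \<le> R"
    using b(1) assms(3) by (auto simp: dist_norm)
  finally show ?thesis
    using b(2) by (simp add: inner_diff_right inner_commute)
qed

lemma cball_subset_imp_support_ge:
  fixes A :: "'a::euclidean_space set"
  assumes "compact A" "cball x \<rho> \<subseteq> A" "0 \<le> \<rho>" "norm u = 1"
  shows "u \<bullet> x + \<rho> \<le> support A u"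
proof -
  have "x + \<rho> *\<^sub>R u \<in> A"
    using assms(2-4) by (auto simp: dist_norm)
  from support_upper[OF assms(1) this, of u] show ?thesis
    using assms(4) by (simp add: inner_add_right power2_norm_eq_inner[symmetric])
qed

lemma support_ge_imp_cball_subset:
  fixes A :: "'a::euclidean_space set"
  assumes "compact A" "convex A" "A \<noteq> {}"
    and support: "\<And>u. norm u = 1 \<Longrightarrow> u \<bullet> x + \<rho> \<le> support A u"
  shows "cball x \<rho> \<subseteq> A"
proof
  fix p assume p: "p \<in> cball x \<rho>"
  show "p \<in> A"
  proof (rule ccontr)
    assume "p \<notin> A"
    then obtain a b where ab: "a \<bullet> p < b" "\<forall>y\<in>A. b < a \<bullet> y"
      using separating_hyperplane_closed_point[of A p] assms(1,2) compact_imp_closed by blast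
    have "a \<noteq> 0"
      using ab assms(3) by force
    define u where "u = - (1 / norm a) *\<^sub>R a"
    have u: "norm u = 1"
      using \<open>a \<noteq> 0\<close> by (simp add: u_def)
    obtain y where y: "y \<in> A" "support A u = u \<bullet> y"
      using support_attained[OF assms(1,3)] by blast
    have "u \<bullet> y < u \<bullet> p"
      using ab y(1) \<open>a \<noteq> 0\<close> by (force simp: u_def divide_simps)
    moreover have "u \<bullet> (p - x) \<le> \<rho>"
      using norm_cauchy_schwarz[of u "p - x"] p u by (simp add: dist_norm norm_minus_commute)
    ultimately show False
      using support[OF u] y(2) by (simp add: inner_diff_right)
  qed
qed

section \<open>Width, inradius and circumradius\<close>

lemma width_le_breadth:
  fixes A :: "'a::euclidean_space set"
  assumes "compact A" "A \<noteq> {}" "norm u = 1"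
  shows "width A \<le> breadth A u"
proof -
  obtain a where "a \<in> A"
    using assms(2) by blast
  then have "0 \<le> breadth A v" for v
    using support_upper[OF assms(1)] lower_support_lower[OF assms(1)] by (smt (verit))
  then show ?thesis
    unfolding width_def using assms(3) by (intro cInf_lower bdd_belowI[where m = 0]) auto
qed

lemma width_greatest:
  fixes A :: "'a::euclidean_space set"
  assumes "\<And>u. norm u = 1 \<Longrightarrow> M \<le> breadth A u"
  shows "M \<le> width A"
proof -
  obtain e :: 'a where "norm e = 1"
    using vector_choose_size zero_le_one by blast
  then show ?thesis
    unfolding width_def using assms by (intro cInf_greatest) auto
qed

lemma width_approx:
  fixes A :: "'a::euclidean_space set"
  assumes "0 < \<epsilon>"
  obtains u where "norm u = 1" "breadth A u < width A + \<epsilon>"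
proof -
  obtain e :: 'a where "norm e = 1"
    using vector_choose_size zero_le_one by blast
  then have "{breadth A u | u. norm u = 1} \<noteq> {}"
    by blast
  from cInf_lessD[OF this, of "width A + \<epsilon>"] assms that show thesis
    unfolding width_def by auto
qed

lemma breadth_eq_diameter_if_width_eq:
  fixes A :: "'a::euclidean_space set"
  assumes "compact A" "A \<noteq> {}" "width A = diameter A" "norm u = 1"
  shows "breadth A u = diameter A"
  using width_le_breadth[OF assms(1,2,4)] breadth_le_diameter[OF assms(1,2,4)] assms(3) by simp

lemma inradius_ge:
  fixes A :: "'a::euclidean_space set"
  assumes "compact A" "cball x \<rho> \<subseteq> A" "0 \<le> \<rho>"
  shows "\<rho> \<le> inradius A"
proof -
  have "\<rho>' \<le> diameter A" if "0 \<le> \<rho>'" "cball y \<rho>' \<subseteq> A" for \<rho>' y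
  proof -
    obtain e :: 'a where e: "norm e = 1"
      using vector_choose_size zero_le_one by blast
    with that have "y \<in> A" "y + \<rho>' *\<^sub>R e \<in> A"
      by (auto simp: dist_norm)
    then have "dist y (y + \<rho>' *\<^sub>R e) \<le> diameter A"
      using diameter_bounded_bound compact_imp_bounded assms(1) by blast
    with e that show ?thesis
      by (simp add: dist_norm)
  qed
  then show ?thesis
    unfolding inradius_def using assms by (intro cSup_upper bdd_aboveI[where M = "diameter A"]) auto
qed

lemma inradius_nonneg:
  fixes A :: "'a::euclidean_space set"
  assumes "compact A" "A \<noteq> {}"
  shows "0 \<le> inradius A"
proof -
  obtain a where "a \<in> A"
    using assms(2) by blast
  then show ?thesis
    using inradius_ge[OF assms(1), of a 0] by simp
qed

lemma inradius_le:
  fixes A :: "'a::euclidean_space set"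
  assumes "A \<noteq> {}" "\<And>x \<rho>. 0 \<le> \<rho> \<Longrightarrow> cball x \<rho> \<subseteq> A \<Longrightarrow> \<rho> \<le> M"
  shows "inradius A \<le> M"
proof -
  obtain a where "a \<in> A"
    using assms(1) by blast
  then have "cball a 0 \<subseteq> A"
    by simp
  then show ?thesis
    unfolding inradius_def using assms(2) by (intro cSup_least) blast+
qed

lemma circumradius_le:
  fixes A :: "'a::euclidean_space set"
  assumes "A \<subseteq> cball x \<rho>" "0 \<le> \<rho>"
  shows "circumradius A \<le> \<rho>"
  unfolding circumradius_def using assms by (intro cInf_lower bdd_belowI[where m = 0]) auto

lemma circumradius_attained:
  fixes A :: "'a::euclidean_space set"
  assumes "compact A" "A \<noteq> {}"
  obtains c where "A \<subseteq> cball c (circumradius A)"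
proof -
  define R where "R = circumradius A"
  define S where "S = {\<rho>. 0 \<le> \<rho> \<and> (\<exists>x. A \<subseteq> cball x \<rho>)}"
  have "S \<noteq> {}"
    using compact_imp_bounded[OF assms(1)] unfolding bounded_subset_cball S_def by auto
  have "Inf S = R"
    unfolding R_def S_def circumradius_def ..
  have "\<exists>x. A \<subseteq> cball x (R + inverse (real (Suc n)))" for n
  proof -
    have "Inf S < R + inverse (real (Suc n))"
      using \<open>Inf S = R\<close> by simp
    then obtain \<rho> where "\<rho> \<in> S" "\<rho> < R + inverse (real (Suc n))"
      using cInf_lessD[OF \<open>S \<noteq> {}\<close>] by blast
    moreover from \<open>\<rho> \<in> S\<close> obtain x where "A \<subseteq> cball x \<rho>"
      unfolding S_def by blast
    ultimately show ?thesis
      using subset_cball[of \<rho> "R + inverse (real (Suc n))" x] by auto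
  qed
  then obtain x where x: "\<And>n. A \<subseteq> cball (x n) (R + inverse (real (Suc n)))"
    by metis
  obtain a where "a \<in> A"
    using assms(2) by blast
  have "x n \<in> cball a (R + 1)" for n
  proof -
    have "dist (x n) a \<le> R + inverse (real (Suc n))"
      using x[of n] \<open>a \<in> A\<close> by auto
    moreover have "inverse (real (Suc n)) \<le> 1"
      by (simp add: inverse_le_1_iff)
    ultimately show ?thesis
      by (simp add: dist_commute)
  qed
  then obtain c s where s: "strict_mono s" "(x \<circ> s) \<longlonglongrightarrow> c"
    using seq_compactE[OF compact_imp_seq_compact[OF compact_cball]] by metis
  have "dist c y \<le> R" if "y \<in> A" for y
  proof (rule LIMSEQ_le)
    show "(\<lambda>n. dist ((x \<circ> s) n) y) \<longlonglongrightarrow> dist c y"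
      by (intro tendsto_intros s)
    show "(\<lambda>n. R + inverse (real (Suc (s n)))) \<longlonglongrightarrow> R"
      using tendsto_add[OF tendsto_const LIMSEQ_subseq_LIMSEQ[OF LIMSEQ_inverse_real_of_nat s(1)],
          of R]
      by (simp add: o_def)
    show "\<exists>N. \<forall>n\<ge>N. dist ((x \<circ> s) n) y \<le> R + inverse (real (Suc (s n)))"
      using subsetD[OF x that] by simp
  qed
  then have "A \<subseteq> cball c R"
    by (simp add: subset_iff)
  then show thesis
    unfolding R_def by (rule that)
qed

lemma circumradius_mono:
  fixes A B :: "'a::euclidean_space set"
  assumes "compact B" "A \<noteq> {}" "A \<subseteq> B"
  shows "circumradius A \<le> circumradius B"
proof -
  obtain c where c: "B \<subseteq> cball c (circumradius B)"
    using circumradius_attained[OF assms(1)] assms(2,3) by blast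
  obtain a where "a \<in> A"
    using assms(2) by blast
  then have "0 \<le> circumradius B"
    using c assms(3) by (meson dist_not_less_zero le_less_trans linorder_not_le mem_cball subsetD)
  then show ?thesis
    using c assms(3) by (intro circumradius_le) auto
qed

lemma cball_width_minus_circumradius_subset:
  fixes A :: "'a::euclidean_space set"
  assumes "compact A" "convex A" "A \<noteq> {}" "A \<subseteq> cball c R"
  shows "cball c (width A - R) \<subseteq> A"
proof (rule support_ge_imp_cball_subset[OF assms(1-3)])
  fix u :: 'a assume u: "norm u = 1"
  show "u \<bullet> c + (width A - R) \<le> support A u"
    using width_le_breadth[OF assms(1,3) u] lower_support_ge_of_subset_cball[OF assms(1,3,4) u]
    by (simp add: inner_commute)
qed

lemma inradius_add_circumradius_le_diameter:
  fixes A :: "'a::euclidean_space set"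
  assumes "compact A" "A \<noteq> {}"
  shows "inradius A + circumradius A \<le> diameter A"
proof -
  have "circumradius A \<le> diameter A - \<rho>" if \<rho>: "0 \<le> \<rho>" "cball x \<rho> \<subseteq> A" for x \<rho>
  proof (rule circumradius_le)
    show "A \<subseteq> cball x (diameter A - \<rho>)"
    proof
      fix p assume "p \<in> A"
      obtain e :: 'a where "norm e = 1"
        using vector_choose_size zero_le_one by blast
      define u where "u = (if p = x then e else (1 / norm (p - x)) *\<^sub>R (p - x))"
      have u: "norm u = 1" "p - x = norm (p - x) *\<^sub>R u"
        using \<open>norm e = 1\<close> by (auto simp: u_def)
      \<comment> \<open>the point of the inscribed ball farthest from \<open>p\<close>\<close>
      have "x - \<rho> *\<^sub>R u \<in> A"
        using \<rho> u(1) by (auto simp: dist_norm)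
      then have "dist p (x - \<rho> *\<^sub>R u) \<le> diameter A"
        using diameter_bounded_bound[OF compact_imp_bounded[OF assms(1)] \<open>p \<in> A\<close>] by blast
      moreover have "p - (x - \<rho> *\<^sub>R u) = (norm (p - x) + \<rho>) *\<^sub>R u"
        using u(2) by (simp add: algebra_simps)
      ultimately show "p \<in> cball x (diameter A - \<rho>)"
        using u(1) \<rho>(1) by (simp add: dist_norm norm_minus_commute)
    qed
    have "x \<in> A"
      using \<rho> by auto
    with \<open>A \<subseteq> cball x (diameter A - \<rho>)\<close> show "0 \<le> diameter A - \<rho>"
      by auto
  qed
  then have "inradius A \<le> diameter A - circumradius A"
    using assms(2) by (intro inradius_le) (auto simp: algebra_simps)
  then show ?thesis
    by simp
qed

lemma inradius_of_constant_width:
  fixes A :: "'a::euclidean_space set"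
  assumes "compact A" "convex A" "A \<noteq> {}" "width A = diameter A"
  shows "inradius A = diameter A - circumradius A"
proof -
  obtain c where "A \<subseteq> cball c (circumradius A)"
    using circumradius_attained[OF assms(1,3)] .
  then have "cball c (diameter A - circumradius A) \<subseteq> A"
    using cball_width_minus_circumradius_subset[OF assms(1-3)] assms(4) by metis
  moreover have "0 \<le> diameter A - circumradius A"
    using inradius_add_circumradius_le_diameter[OF assms(1,3)] inradius_nonneg[OF assms(1,3)]
    by simp
  ultimately have "diameter A - circumradius A \<le> inradius A"
    by (rule inradius_ge[OF assms(1)])
  then show ?thesis
    using inradius_add_circumradius_le_diameter[OF assms(1,3)] by simp
qed

section \<open>Touching directions of an inscribed ball\<close>

lemma inball_touching_direction_approx:
  fixes A :: "'a::euclidean_space set"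
  assumes A: "compact A" "convex A" "A \<noteq> {}"
    and inball: "cball c r \<subseteq> A" "r = inradius A" and "0 < e"
  shows "\<exists>u. norm u = 1 \<and> v \<bullet> u < e \<and> support A u < c \<bullet> u + r + e * (e + norm v)"
proof (rule ccontr)
  assume no_direction: "\<not> ?thesis"
  \<comment> \<open>otherwise the inscribed ball could be moved by \<open>- e *\<^sub>R v\<close> and enlarged by \<open>e\<^sup>2\<close>\<close>
  have "cball (c - e *\<^sub>R v) (r + e * e) \<subseteq> A"
  proof (rule support_ge_imp_cball_subset[OF A])
    fix u :: 'a assume u: "norm u = 1"
    have "u \<bullet> c + r \<le> support A u"
      using cball_subset_imp_support_ge[OF A(1) inball(1) _ u] inradius_nonneg[OF A(1,3)] inball(2)
      by simp
    moreover have "- (e * norm v) \<le> e * (v \<bullet> u)"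
      using norm_cauchy_schwarz[of "- v" u] u \<open>0 < e\<close> mult_left_mono[of "- norm v" "v \<bullet> u" e]
      by simp
    moreover have "e * e \<le> e * (v \<bullet> u) \<or> c \<bullet> u + r + e * (e + norm v) \<le> support A u"
      using no_direction u \<open>0 < e\<close> by (meson not_le mult_left_mono less_imp_le)
    ultimately show "u \<bullet> (c - e *\<^sub>R v) + (r + e * e) \<le> support A u"
      by (auto simp: inner_diff_right inner_commute algebra_simps)
  qed
  then have "r + e * e \<le> inradius A"
    by (rule inradius_ge[OF A(1)]) (use inradius_nonneg[OF A(1,3)] inball(2) in simp)
  with inball(2) \<open>0 < e\<close> show False
    by (simp add: mult_le_0_iff)
qed

lemma inball_touching_direction:
  fixes A :: "'a::euclidean_space set"
  assumes A: "compact A" "convex A" "A \<noteq> {}"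
    and inball: "cball c r \<subseteq> A" "r = inradius A"
  obtains u where "norm u = 1" "v \<bullet> u \<le> 0" "support A u \<le> c \<bullet> u + r"
proof -
  define e where "e n = inverse (real (Suc n))" for n
  have "\<exists>u. norm u = 1 \<and> v \<bullet> u < e n \<and> support A u < c \<bullet> u + r + e n * (e n + norm v)" for n
    using inball_touching_direction_approx[OF A inball] by (simp add: e_def)
  then obtain u where u: "\<And>n. norm (u n) = 1" "\<And>n. v \<bullet> u n < e n"
      "\<And>n. support A (u n) < c \<bullet> u n + r + e n * (e n + norm v)"
    by metis
  have "u n \<in> sphere 0 1" for n
    using u(1) by simp
  then obtain w s where ws: "w \<in> sphere 0 1" "strict_mono s" "(u \<circ> s) \<longlonglongrightarrow> w"
    using seq_compactE[OF compact_imp_seq_compact[OF compact_sphere]] by metis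
  have e: "(\<lambda>n. e (s n)) \<longlonglongrightarrow> 0"
    using LIMSEQ_subseq_LIMSEQ[OF LIMSEQ_inverse_real_of_nat ws(2)] by (simp add: e_def o_def)
  have us: "(\<lambda>n. u (s n)) \<longlonglongrightarrow> w"
    using ws(3) by (simp add: o_def)
  have "v \<bullet> w \<le> 0"
    using u(2) less_imp_le by (intro LIMSEQ_le[OF tendsto_inner[OF tendsto_const us] e]) blast
  moreover have "support A w \<le> c \<bullet> w + r"
  proof (rule cSUP_least[OF A(3)])
    fix y assume "y \<in> A"
    have "u (s n) \<bullet> y \<le> c \<bullet> u (s n) + r + e (s n) * (e (s n) + norm v)" for n
      using support_upper[OF A(1) \<open>y \<in> A\<close>, of "u (s n)"] u(3)[of "s n"] by simp
    moreover have "(\<lambda>n. c \<bullet> u (s n) + r + e (s n) * (e (s n) + norm v))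
        \<longlonglongrightarrow> c \<bullet> w + r + 0 * (0 + norm v)"
      by (intro tendsto_intros us e)
    ultimately show "w \<bullet> y \<le> c \<bullet> w + r"
      by (intro LIMSEQ_le[OF tendsto_inner[OF us tendsto_const]]) auto
  qed
  ultimately show thesis
    using ws(1) that by simp
qed

section \<open>Minkowski combinations\<close>

lemma mink_comb_eq_sums:
  "mink_comb l A B = (\<Union>x\<in>(\<lambda>x. l *\<^sub>R x) ` A. \<Union>y\<in>(\<lambda>x. (1 - l) *\<^sub>R x) ` B. {x + y})"
  unfolding mink_comb_def by auto

lemma compact_mink_comb: "compact A \<Longrightarrow> compact B \<Longrightarrow> compact (mink_comb l A B)"
  unfolding mink_comb_eq_sums by (intro compact_sums' compact_scaling)

lemma convex_mink_comb: "convex A \<Longrightarrow> convex B \<Longrightarrow> convex (mink_comb l A B)"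
  unfolding mink_comb_eq_sums by (intro convex_sums convex_scaling)

lemma mink_comb_nonempty: "A \<noteq> {} \<Longrightarrow> B \<noteq> {} \<Longrightarrow> mink_comb l A B \<noteq> {}"
  unfolding mink_comb_def by auto

lemma subset_mink_comb:
  assumes "A \<subseteq> B"
  shows "A \<subseteq> mink_comb l A B"
proof
  fix a assume "a \<in> A"
  moreover have "a = l *\<^sub>R a + (1 - l) *\<^sub>R a"
    by (simp add: algebra_simps)
  ultimately show "a \<in> mink_comb l A B"
    unfolding mink_comb_def using assms by blast
qed

lemma mink_comb_subset:
  assumes "convex B" "A \<subseteq> B" "0 \<le> l" "l \<le> 1"
  shows "mink_comb l A B \<subseteq> B"
  unfolding mink_comb_def using assms by (auto intro!: convexD)

lemma support_mink_comb:
  fixes A B :: "'a::euclidean_space set"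
  assumes "compact A" "A \<noteq> {}" "compact B" "B \<noteq> {}" "0 \<le> l" "l \<le> 1"
  shows "support (mink_comb l A B) u = l * support A u + (1 - l) * support B u"
proof (rule antisym)
  show "support (mink_comb l A B) u \<le> l * support A u + (1 - l) * support B u"
  proof (rule cSUP_least)
    show "mink_comb l A B \<noteq> {}"
      using mink_comb_nonempty assms(2,4) .
  next
    fix y assume "y \<in> mink_comb l A B"
    then obtain a b where "y = l *\<^sub>R a + (1 - l) *\<^sub>R b" "a \<in> A" "b \<in> B"
      unfolding mink_comb_def by auto
    with support_upper[OF assms(1)] support_upper[OF assms(3)] assms(5,6)
    show "u \<bullet> y \<le> l * support A u + (1 - l) * support B u"
      by (auto simp: inner_add_right intro!: add_mono mult_left_mono)
  qed
next
  obtain a b where "a \<in> A" "support A u = u \<bullet> a" "b \<in> B" "support B u = u \<bullet> b"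
    using support_attained assms(1-4) by metis
  moreover have "l *\<^sub>R a + (1 - l) *\<^sub>R b \<in> mink_comb l A B"
    unfolding mink_comb_def using \<open>a \<in> A\<close> \<open>b \<in> B\<close> by blast
  ultimately show "l * support A u + (1 - l) * support B u \<le> support (mink_comb l A B) u"
    using support_upper[OF compact_mink_comb[OF assms(1,3)]] by (fastforce simp: inner_add_right)
qed

lemma breadth_mink_comb:
  fixes A B :: "'a::euclidean_space set"
  assumes "compact A" "A \<noteq> {}" "compact B" "B \<noteq> {}" "0 \<le> l" "l \<le> 1"
  shows "breadth (mink_comb l A B) u = l * breadth A u + (1 - l) * breadth B u"
  using support_mink_comb[OF assms, of u] support_mink_comb[OF assms, of "- u"]
  by (simp add: lower_support_eq_uminus_support algebra_simps)

lemma width_mink_comb_constant_width: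
  fixes A B :: "'a::euclidean_space set"
  assumes A: "compact A" "A \<noteq> {}" and B: "compact B" "B \<noteq> {}" "width B = diameter B"
    and l: "0 \<le> l" "l \<le> 1"
  shows "width (mink_comb l A B) = l * width A + (1 - l) * diameter B"
proof -
  let ?L = "mink_comb l A B"
  have L: "compact ?L" "?L \<noteq> {}"
    using compact_mink_comb[OF A(1) B(1)] mink_comb_nonempty[OF A(2) B(2)] .
  have breadth: "breadth ?L u = l * breadth A u + (1 - l) * diameter B" if "norm u = 1" for u
    using breadth_mink_comb[OF A B(1,2) l] breadth_eq_diameter_if_width_eq[OF B that] by simp
  show ?thesis
  proof (rule antisym)
    show "width ?L \<le> l * width A + (1 - l) * diameter B"
    proof (rule field_le_epsilon)
      fix \<epsilon> :: real assume "0 < \<epsilon>"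
      then obtain u :: 'a where u: "norm u = 1" "breadth A u < width A + \<epsilon>"
        by (rule width_approx)
      have "width ?L \<le> l * breadth A u + (1 - l) * diameter B"
        using width_le_breadth[OF L u(1)] breadth[OF u(1)] by simp
      also have "\<dots> \<le> l * (width A + \<epsilon>) + (1 - l) * diameter B"
        using u(2) l by (simp add: mult_left_mono)
      also have "\<dots> \<le> l * width A + (1 - l) * diameter B + \<epsilon>"
        using l \<open>0 < \<epsilon>\<close> by (simp add: algebra_simps)
      finally show "width ?L \<le> l * width A + (1 - l) * diameter B + \<epsilon>" .
    qed
    show "l * width A + (1 - l) * diameter B \<le> width ?L"
      using width_le_breadth[OF A] breadth l by (intro width_greatest) (simp add: mult_left_mono)
  qed
qed

lemma inradius_mink_comb:
  fixes A B :: "'a::euclidean_space set"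
  assumes A: "compact A" "convex A" "A \<noteq> {}" and B: "compact B" "convex B" "B \<noteq> {}"
    and inball_A: "cball c rA \<subseteq> A" "rA = inradius A"
    and ball_B: "cball c rB \<subseteq> B" "0 \<le> rB"
    and touching: "\<And>u. norm u = 1 \<Longrightarrow> support A u \<le> c \<bullet> u + rA \<Longrightarrow> support B u \<le> c \<bullet> u + rB"
    and l: "0 \<le> l" "l \<le> 1"
  shows "inradius (mink_comb l A B) = l * rA + (1 - l) * rB"
proof -
  let ?L = "mink_comb l A B"
  let ?s = "l * rA + (1 - l) * rB"
  have L: "compact ?L" "convex ?L" "?L \<noteq> {}"
    using compact_mink_comb[OF A(1) B(1)] convex_mink_comb[OF A(2) B(2)]
      mink_comb_nonempty[OF A(3) B(3)] .
  have "0 \<le> rA"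
    using inradius_nonneg[OF A(1,3)] inball_A(2) by simp
  have support_L: "support ?L u = l * support A u + (1 - l) * support B u" for u
    using support_mink_comb[OF A(1,3) B(1,3) l] .
  show ?thesis
  proof (rule antisym)
    show "inradius ?L \<le> ?s"
    proof (rule inradius_le[OF L(3)])
      fix x \<rho> assume \<rho>: "0 \<le> \<rho>" "cball x \<rho> \<subseteq> ?L"
      \<comment> \<open>a direction in which the inball of \<open>A\<close> touches and which does not point from \<open>x\<close> to \<open>c\<close>\<close>
      obtain u where u: "norm u = 1" "(c - x) \<bullet> u \<le> 0" "support A u \<le> c \<bullet> u + rA"
        using inball_touching_direction[OF A inball_A] .
      have "u \<bullet> x + \<rho> \<le> l * support A u + (1 - l) * support B u"
        using cball_subset_imp_support_ge[OF L(1) \<rho>(2,1) u(1)] support_L by simp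
      also have "\<dots> \<le> l * (c \<bullet> u + rA) + (1 - l) * (c \<bullet> u + rB)"
        using u(3) touching[OF u(1,3)] l by (intro add_mono mult_left_mono) auto
      finally show "\<rho> \<le> ?s"
        using u(2) by (simp add: inner_diff_left inner_commute algebra_simps)
    qed
    have "cball c ?s \<subseteq> ?L"
    proof (rule support_ge_imp_cball_subset[OF L])
      fix u :: 'a assume u: "norm u = 1"
      have "l * (u \<bullet> c + rA) + (1 - l) * (u \<bullet> c + rB) \<le> l * support A u + (1 - l) * support B u"
        using cball_subset_imp_support_ge[OF A(1) inball_A(1) \<open>0 \<le> rA\<close> u]
          cball_subset_imp_support_ge[OF B(1) ball_B u] l
        by (intro add_mono mult_left_mono) auto
      then show "u \<bullet> c + ?s \<le> support ?L u"
        unfolding support_L by (simp add: algebra_simps)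
    qed
    then show "?s \<le> inradius ?L"
      using \<open>0 \<le> rA\<close> ball_B(2) l by (intro inradius_ge[OF L(1)]) auto
  qed
qed

lemma touching_direction_of_subset:
  fixes A B :: "'a::euclidean_space set"
  assumes "compact A" "A \<noteq> {}" "compact B" "A \<subseteq> B" "norm u = 1"
    and "width A = r + R" "support A u \<le> c \<bullet> u + r"
  shows "support B u \<le> c \<bullet> u + (diameter B - R)"
proof -
  obtain a where a: "a \<in> A" "lower_support A u = u \<bullet> a"
    using lower_support_attained[OF assms(1,2)] .
  have "lower_support B u \<le> lower_support A u"
    using lower_support_lower[OF assms(3)] a assms(4) by auto
  moreover have "width A \<le> breadth A u"
    using width_le_breadth[OF assms(1,2,5)] .
  moreover have "breadth B u \<le> diameter B"
    using breadth_le_diameter[OF assms(3) _ assms(5)] a(1) assms(4) by auto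
  ultimately show ?thesis
    using assms(6,7) by simp
qed

theorem lemma2p3:
  fixes K C :: "'a::euclidean_space set" and l :: real
  assumes "convex_body K" and "circumradius K > 0"
    and "width K = inradius K + circumradius K"
    and "scott_completion K C"
    and "0 \<le> l" and "l \<le> 1"
  shows "fmap (mink_comb l K C) = l *\<^sub>R fmap K + (1 - l) *\<^sub>R fmap C
    \<and> width (mink_comb l K C) = inradius (mink_comb l K C) + circumradius (mink_comb l K C)"
proof -
  let ?L = "mink_comb l K C"
  define R D where "R = circumradius K" and "D = diameter C"
  have K: "compact K" "convex K" "K \<noteq> {}"
    using assms(1) unfolding convex_body_def by auto
  have C: "compact C" "convex C" "C \<noteq> {}" and "K \<subseteq> C" "diameter K = D" "width C = D"
    and "circumradius C = R"
    using assms(4) unfolding scott_completion_def convex_body_def D_def R_def by auto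
  have L: "K \<subseteq> ?L" "?L \<subseteq> C"
    using subset_mink_comb[OF \<open>K \<subseteq> C\<close>] mink_comb_subset[OF C(2) \<open>K \<subseteq> C\<close> assms(5,6)] .
  obtain c where "C \<subseteq> cball c R"
    using circumradius_attained[OF C(1,3)] \<open>circumradius C = R\<close> by metis
  have rC: "inradius C = D - R"
    using inradius_of_constant_width[OF C] \<open>width C = D\<close> D_def \<open>circumradius C = R\<close> by simp
  have rL: "inradius ?L = l * inradius K + (1 - l) * inradius C"
  proof (rule inradius_mink_comb[OF K C _ refl])
    show "cball c (inradius K) \<subseteq> K"
      using cball_width_minus_circumradius_subset[OF K, of c R] \<open>C \<subseteq> cball c R\<close> \<open>K \<subseteq> C\<close>
        assms(3) R_def by auto
    show "cball c (inradius C) \<subseteq> C" "0 \<le> inradius C"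
      using cball_width_minus_circumradius_subset[OF C \<open>C \<subseteq> cball c R\<close>] \<open>width C = D\<close> rC
        inradius_nonneg[OF C(1,3)] by auto
    show "support C u \<le> c \<bullet> u + inradius C"
      if "norm u = 1" "support K u \<le> c \<bullet> u + inradius K" for u
      using touching_direction_of_subset[OF K(1,3) C(1) \<open>K \<subseteq> C\<close> that(1) _ that(2)] assms(3)
        rC D_def R_def by simp
  qed (use assms(5,6) in auto)
  have wL: "width ?L = l * width K + (1 - l) * D"
    using width_mink_comb_constant_width[OF K(1,3) C(1,3) _ assms(5,6)] \<open>width C = D\<close> D_def
    by simp
  have RL: "circumradius ?L = R"
    using circumradius_mono[OF compact_mink_comb[OF K(1) C(1)] K(3) L(1)]
      circumradius_mono[OF C(1) _ L(2)] L(1) K(3) \<open>circumradius C = R\<close> R_def by force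
  have DL: "diameter ?L = D"
    using diameter_subset[OF L(1) compact_imp_bounded[OF compact_mink_comb[OF K(1) C(1)]]]
      diameter_subset[OF L(2) compact_imp_bounded[OF C(1)]] \<open>diameter K = D\<close> D_def
    by simp
  have "width ?L = inradius ?L + circumradius ?L"
    using rL wL RL rC assms(3) unfolding R_def by (simp add: algebra_simps)
  moreover have "fmap ?L = l *\<^sub>R fmap K + (1 - l) *\<^sub>R fmap C"
    using assms(2) unfolding fmap_def rL wL RL DL \<open>circumradius C = R\<close> \<open>width C = D\<close>
      \<open>diameter K = D\<close> D_def[symmetric] R_def[symmetric]
    by (simp add: field_simps)
  ultimately show ?thesis
    by simp
qed

end
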